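(* Let $E$ be the equational theory of implicative semilattices (algebras in signature $\{\top,\wedge,\to\}$; the $\{\top,\wedge,\to\}$-fragment of intuitionistic logic) and $C=\{z\}$. The $C$-unification problem $\big((x\to z)\wedge(y\to z)\to z,\ \top\big)$ has the $C$-unifiers $\sigma=\{x\mapsto\top,\ y\mapsto y\}$ and $\tau=\{x\mapsto x,\ y\mapsto\top\}$ (both fixing $z$), which are incomparable, and there is no $C$-unifier $\mu$ such that both $\sigma$ and $\tau$ are less general than $\mu$. Consequently this problem has no $C$-mgu, and $E$ does not have unitary svr-unification type.
   Context: For a finite set $C$ of variables, a substitution $\sigma$ is $C$-invariant if $\sigma(c)=c$ for $c\in C$ and $\sigma(x)$ contains no variable of $C$ for $x\notin C$. A $C$-unifier of a problem $\{(\phi_j,\psi_j)\}$ is a $C$-invariant substitution $\sigma$ with $E\models\sigma(\phi_j)=\sigma(\psi_j)$ for all $j$. A substitution $\tau$ is less general than $\sigma$ if there is a substitution $\theta$ with $E\models\tau(v)=\theta(\sigma(v))$ for every variable $v$. A $C$-mgu is a $C$-unifier $\mu$ such that every $C$-unifier is less general than $\mu$; $E$ has unitary svr-unification type if every $C$-unification problem (for every $C$) with a $C$-unifier has a $C$-mgu. *)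

theory Defs
  imports Main
begin

datatype 'v trm = Var 'v | Top | Meet "'v trm" "'v trm" | Imp "'v trm" "'v trm"

primrec vars :: "'v trm \<Rightarrow> 'v set" where
  "vars (Var v) = {v}"
| "vars Top = {}"
| "vars (Meet s t) = vars s \<union> vars t"
| "vars (Imp s t) = vars s \<union> vars t"

type_synonym 'v subst = "'v \<Rightarrow> 'v trm"

primrec app :: "'v subst \<Rightarrow> 'v trm \<Rightarrow> 'v trm" where
  "app \<sigma> (Var v) = \<sigma> v"
| "app \<sigma> Top = Top"
| "app \<sigma> (Meet s t) = Meet (app \<sigma> s) (app \<sigma> t)"
| "app \<sigma> (Imp s t) = Imp (app \<sigma> s) (app \<sigma> t)"

text \<open>Equational basis of the variety of implicative semilattices
  (meet-semilattice with top, plus the standard identities for relative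
  pseudocomplement).\<close>
inductive isl_axiom :: "'v trm \<Rightarrow> 'v trm \<Rightarrow> bool" where
  "isl_axiom (Meet x x) x"
| "isl_axiom (Meet x y) (Meet y x)"
| "isl_axiom (Meet x (Meet y z)) (Meet (Meet x y) z)"
| "isl_axiom (Meet x Top) x"
| "isl_axiom (Imp x x) Top"
| "isl_axiom (Meet x (Imp x y)) (Meet x y)"
| "isl_axiom (Meet y (Imp x y)) y"
| "isl_axiom (Imp x (Meet y z)) (Meet (Imp x y) (Imp x z))"

text \<open>E |= s = t: the equational theory E of implicative semilattices,
  i.e. the closure of the axioms under equational logic
  (reflexivity, symmetry, transitivity, congruence; axioms are schematic,
  hence closed under substitution).\<close>
inductive E_eq :: "'v trm \<Rightarrow> 'v trm \<Rightarrow> bool" where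
  ax: "isl_axiom s t \<Longrightarrow> E_eq s t"
| refl: "E_eq t t"
| sym: "E_eq s t \<Longrightarrow> E_eq t s"
| trans: "E_eq s t \<Longrightarrow> E_eq t u \<Longrightarrow> E_eq s u"
| meet: "E_eq s1 t1 \<Longrightarrow> E_eq s2 t2 \<Longrightarrow> E_eq (Meet s1 s2) (Meet t1 t2)"
| imp: "E_eq s1 t1 \<Longrightarrow> E_eq s2 t2 \<Longrightarrow> E_eq (Imp s1 s2) (Imp t1 t2)"

definition C_invariant :: "'v set \<Rightarrow> 'v subst \<Rightarrow> bool" where
  "C_invariant C \<sigma> \<longleftrightarrow> (\<forall>c\<in>C. \<sigma> c = Var c) \<and> (\<forall>x. x \<notin> C \<longrightarrow> vars (\<sigma> x) \<inter> C = {})"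

definition C_unifier :: "'v set \<Rightarrow> ('v trm \<times> 'v trm) list \<Rightarrow> 'v subst \<Rightarrow> bool" where
  "C_unifier C P \<sigma> \<longleftrightarrow> C_invariant C \<sigma> \<and> (\<forall>(s, t) \<in> set P. E_eq (app \<sigma> s) (app \<sigma> t))"

definition less_general :: "'v subst \<Rightarrow> 'v subst \<Rightarrow> bool" where
  "less_general \<tau> \<sigma> \<longleftrightarrow> (\<exists>\<theta>. \<forall>v. E_eq (\<tau> v) (app \<theta> (\<sigma> v)))"

definition C_mgu :: "'v set \<Rightarrow> ('v trm \<times> 'v trm) list \<Rightarrow> 'v subst \<Rightarrow> bool" where
  "C_mgu C P \<mu> \<longleftrightarrow> C_unifier C P \<mu> \<and> (\<forall>\<sigma>. C_unifier C P \<sigma> \<longrightarrow> less_general \<sigma> \<mu>)"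

definition unitary_svr :: "'v itself \<Rightarrow> bool" where
  "unitary_svr _ \<longleftrightarrow> (\<forall>(C :: 'v set) P. finite C \<longrightarrow> (\<exists>\<sigma>. C_unifier C P \<sigma>) \<longrightarrow> (\<exists>\<mu>. C_mgu C P \<mu>))"

end

theory Submission
  imports Defs
begin

text \<open>Both substitutions unify the problem, and neither is an instance of the other because
  no instance of a variable is E-equal to \<open>Top\<close> (two-valued semantics). Suppose \<open>\<mu>\<close> is a
  \<open>{z}\<close>-unifier having \<open>\<sigma> \<approx> \<theta>\<^sub>\<sigma> \<circ> \<mu>\<close> and \<open>\<tau> \<approx> \<theta>\<^sub>\<tau> \<circ> \<mu>\<close> as instances, and put \<open>a = \<mu> x\<close>, \<open>b = \<mu> y\<close>.
  As \<open>z\<close> occurs in neither, interpreting \<open>z\<close> as "\<open>a\<close> or \<open>b\<close>" in a Kripke model shows that every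
  world forces \<open>a\<close> or \<open>b\<close>. In a model with a root below two classical leaves, persistence then
  makes \<open>a\<close> true at both leaves or \<open>b\<close> true at both. But \<open>\<theta>\<^sub>\<tau> a \<approx> x\<close> and \<open>\<theta>\<^sub>\<sigma> b \<approx> y\<close>, so
  pulling back along \<open>\<theta>\<^sub>\<tau>\<close> a valuation falsifying \<open>x\<close>, and along \<open>\<theta>\<^sub>\<sigma>\<close> one falsifying \<open>y\<close>,
  gives leaves refuting \<open>a\<close> and \<open>b\<close> respectively.\<close>

primrec beval :: "('v \<Rightarrow> bool) \<Rightarrow> 'v trm \<Rightarrow> bool" where
  "beval f (Var v) = f v"
| "beval f Top = True"
| "beval f (Meet s t) = (beval f s \<and> beval f t)"
| "beval f (Imp s t) = (beval f s \<longrightarrow> beval f t)"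

lemma beval_sound: "E_eq s t \<Longrightarrow> beval f s = beval f t"
proof (induction rule: E_eq.induct)
  case (ax s t) then show ?case by (cases rule: isl_axiom.cases) auto
qed auto

lemma beval_app: "beval f (app \<theta> t) = beval (\<lambda>v. beval f (\<theta> v)) t"
  by (induction t) auto

lemma not_E_eq_Var_Top: "\<not> E_eq (Var v) Top"
  using beval_sound[of "Var v" Top "\<lambda>_. False"] by auto

primrec forces :: "('w \<Rightarrow> 'w \<Rightarrow> bool) \<Rightarrow> ('v \<Rightarrow> 'w \<Rightarrow> bool) \<Rightarrow> 'w \<Rightarrow> 'v trm \<Rightarrow> bool" where
  "forces R V w (Var v) = V v w"
| "forces R V w Top = True"
| "forces R V w (Meet s t) = (forces R V w s \<and> forces R V w t)"
| "forces R V w (Imp s t) = (\<forall>w'. R w w' \<longrightarrow> forces R V w' s \<longrightarrow> forces R V w' t)"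

definition mono_valuation :: "('w \<Rightarrow> 'w \<Rightarrow> bool) \<Rightarrow> ('v \<Rightarrow> 'w \<Rightarrow> bool) \<Rightarrow> bool" where
  "mono_valuation R V \<longleftrightarrow> (\<forall>v w w'. R w w' \<longrightarrow> V v w \<longrightarrow> V v w')"

lemma forces_mono:
  assumes "transp R" "mono_valuation R V" "R w w'" "forces R V w t"
  shows "forces R V w' t"
  using assms(3,4)
proof (induction t arbitrary: w w')
  case (Var v) then show ?case using assms(2) by (auto simp: mono_valuation_def)
next
  case (Imp s t) then show ?case using assms(1) by (auto dest: transpD)
qed auto

lemma forces_sound:
  assumes "reflp R" "transp R" "mono_valuation R V" "E_eq s t"
  shows "forces R V w s = forces R V w t"
  using assms(4)
proof (induction arbitrary: w rule: E_eq.induct)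
  case (ax s t)
  note refl = reflpD[OF assms(1)] and mono = forces_mono[OF assms(2,3)]
  from ax show ?case
    by (cases rule: isl_axiom.cases) (auto intro: refl mono)
qed auto

lemma forces_cong:
  "(\<And>v. v \<in> vars t \<Longrightarrow> V v = V' v) \<Longrightarrow> forces R V w t = forces R V' w t"
  by (induction t arbitrary: w) auto

lemma forces_maximal:
  assumes "R w w" "\<And>w'. R w w' \<Longrightarrow> w' = w"
  shows "forces R V w t = beval (\<lambda>v. V v w) t"
  using assms by (induction t) auto

definition wedge :: "'a option \<Rightarrow> 'a option \<Rightarrow> bool" where
  "wedge w w' \<longleftrightarrow> w = None \<or> w = w'"

lemma reflp_wedge: "reflp wedge"
  by (simp add: reflp_def wedge_def)

lemma transp_wedge: "transp wedge"
  by (auto simp: transp_def wedge_def)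

lemma forces_wedge_leaf: "forces wedge V (Some l) t = beval (\<lambda>v. V v (Some l)) t"
  by (rule forces_maximal) (auto simp: wedge_def)

text \<open>\<open>((a \<or> b) \<rightarrow> c) \<rightarrow> c\<close> expressed without disjunction.\<close>
definition problem_trm :: "'v trm \<Rightarrow> 'v trm \<Rightarrow> 'v trm \<Rightarrow> 'v trm" where
  "problem_trm a b c = Imp (Meet (Imp a c) (Imp b c)) c"

lemma app_problem_trm [simp]:
  "app \<theta> (problem_trm a b c) = problem_trm (app \<theta> a) (app \<theta> b) (app \<theta> c)"
  by (simp add: problem_trm_def)

declare E_eq.trans [trans]

lemma E_eq_Imp_Top: "E_eq (Imp Top t) t"
proof -
  have "E_eq (Imp Top t) (Meet (Imp Top t) Top)"
    by (rule E_eq.sym, rule E_eq.ax, rule isl_axiom.intros)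
  also have "E_eq \<dots> (Meet Top (Imp Top t))" by (rule E_eq.ax, rule isl_axiom.intros)
  also have "E_eq \<dots> (Meet Top t)" by (rule E_eq.ax, rule isl_axiom.intros)
  also have "E_eq \<dots> (Meet t Top)" by (rule E_eq.ax, rule isl_axiom.intros)
  also have "E_eq \<dots> t" by (rule E_eq.ax, rule isl_axiom.intros)
  finally show ?thesis .
qed

lemma E_eq_problem_trm_Top_left: "E_eq (problem_trm Top b c) Top"
proof -
  have "E_eq (problem_trm Top b c) (Imp (Meet c (Imp b c)) c)"
    unfolding problem_trm_def by (intro E_eq.imp E_eq.meet E_eq.refl E_eq_Imp_Top)
  also have "E_eq \<dots> (Imp c c)" by (intro E_eq.imp E_eq.refl E_eq.ax isl_axiom.intros)
  also have "E_eq \<dots> Top" by (rule E_eq.ax, rule isl_axiom.intros)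
  finally show ?thesis .
qed

lemma E_eq_problem_trm_swap: "E_eq (problem_trm a b c) (problem_trm b a c)"
  unfolding problem_trm_def by (intro E_eq.imp E_eq.refl E_eq.ax isl_axiom.intros)

lemma E_eq_problem_trm_Top_right: "E_eq (problem_trm a Top c) Top"
  using E_eq.trans[OF E_eq_problem_trm_swap E_eq_problem_trm_Top_left] .

lemma forces_disj_if_problem_trm_valid:
  assumes "reflp R" "transp R" "mono_valuation R V"
    and valid: "E_eq (problem_trm a b (Var z)) Top" and "z \<notin> vars a" "z \<notin> vars b"
  shows "forces R V w a \<or> forces R V w b"
proof -
  define V' where "V' v = (if v = z then (\<lambda>w. forces R V w a \<or> forces R V w b) else V v)" for v
  have "mono_valuation R V'"
    using assms(3) forces_mono[OF assms(2,3)] by (auto simp: mono_valuation_def V'_def)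
  then have "forces R V' w (problem_trm a b (Var z))"
    using forces_sound[OF assms(1,2) _ valid] by simp
  moreover have "forces R V' w' a = forces R V w' a" "forces R V' w' b = forces R V w' b" for w'
    using assms(5,6) by (auto intro!: forces_cong simp: V'_def)
  ultimately have "V' z w"
    using reflpD[OF assms(1)] by (auto simp: problem_trm_def V'_def)
  then show ?thesis by (simp add: V'_def)
qed

lemma beval_disj_if_problem_trm_valid:
  assumes "E_eq (problem_trm a b (Var z)) Top" "z \<notin> vars a" "z \<notin> vars b"
  shows "(beval f a \<and> beval g a) \<or> (beval f b \<and> beval g b)"
proof -
  define V where "V v w = (case w of None \<Rightarrow> f v \<and> g v | Some l \<Rightarrow> if l then f v else g v)"
    for v and w :: "bool option"
  have "mono_valuation wedge V"
    by (auto simp: mono_valuation_def wedge_def V_def split: option.splits)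
  note mono = forces_mono[OF transp_wedge this] and
    root = forces_disj_if_problem_trm_valid[OF reflp_wedge transp_wedge this assms, of None]
  have "forces wedge V (Some l) t = beval (if l then f else g) t" for l t
    unfolding forces_wedge_leaf by (simp add: V_def if_distrib)
  then show ?thesis
    using root mono[of None "Some True"] mono[of None "Some False"] by (force simp: wedge_def)
qed

lemma C_invariant_upd_Top: "x \<notin> C \<Longrightarrow> C_invariant C (Var(x := Top))"
  by (auto simp: C_invariant_def)

lemma not_less_general_upd_Top:
  assumes "x \<noteq> y"
  shows "\<not> less_general (Var(x := Top)) (Var(y := Top))"
proof
  assume "less_general (Var(x := Top)) (Var(y := Top))"
  then obtain \<theta> where "E_eq ((Var(x := Top)) y) (app \<theta> ((Var(y := Top)) y))"
    unfolding less_general_def by blast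
  with assms show False using not_E_eq_Var_Top[of y] by simp
qed

lemma no_common_generalization:
  assumes "x \<noteq> y" "x \<noteq> z" "y \<noteq> z"
    and unif: "C_unifier {z} [(problem_trm (Var x) (Var y) (Var z), Top)] \<mu>"
    and "less_general (Var(x := Top)) \<mu>" "less_general (Var(y := Top)) \<mu>"
  shows False
proof -
  obtain \<theta>\<^sub>\<sigma> \<theta>\<^sub>\<tau> where "\<And>v. E_eq ((Var(x := Top)) v) (app \<theta>\<^sub>\<sigma> (\<mu> v))"
    and "\<And>v. E_eq ((Var(y := Top)) v) (app \<theta>\<^sub>\<tau> (\<mu> v))"
    using assms(5,6) by (auto simp: less_general_def)
  then have inst: "E_eq (Var y) (app \<theta>\<^sub>\<sigma> (\<mu> y))" "E_eq (Var x) (app \<theta>\<^sub>\<tau> (\<mu> x))"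
    by (metis assms(1) fun_upd_other)+
  from unif have "E_eq (problem_trm (\<mu> x) (\<mu> y) (Var z)) Top" "z \<notin> vars (\<mu> x)" "z \<notin> vars (\<mu> y)"
    using assms(2,3) by (auto simp: C_unifier_def C_invariant_def)
  from beval_disj_if_problem_trm_valid[OF this,
      of "\<lambda>v. beval (\<lambda>u. u \<noteq> x) (\<theta>\<^sub>\<tau> v)" "\<lambda>v. beval (\<lambda>u. u \<noteq> y) (\<theta>\<^sub>\<sigma> v)"]
  show False
    using beval_sound[OF inst(1), of "\<lambda>u. u \<noteq> y"] beval_sound[OF inst(2), of "\<lambda>u. u \<noteq> x"]
    by (simp add: beval_app)
qed

theorem mainTheorem12:
  fixes x y z :: nat
  assumes "x \<noteq> y" "x \<noteq> z" "y \<noteq> z"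
  defines "P \<equiv> [(Imp (Meet (Imp (Var x) (Var z)) (Imp (Var y) (Var z))) (Var z), Top)]"
      and "\<sigma> \<equiv> Var(x := Top)"
      and "\<tau> \<equiv> Var(y := Top)"
  shows "C_unifier {z} P \<sigma> \<and> C_unifier {z} P \<tau>
         \<and> \<not> less_general \<sigma> \<tau> \<and> \<not> less_general \<tau> \<sigma>
         \<and> \<not> (\<exists>\<mu>. C_unifier {z} P \<mu> \<and> less_general \<sigma> \<mu> \<and> less_general \<tau> \<mu>)
         \<and> \<not> (\<exists>\<mu>. C_mgu {z} P \<mu>)
         \<and> \<not> unitary_svr TYPE(nat)"
proof -
  have P: "P = [(problem_trm (Var x) (Var y) (Var z), Top)]"
    by (simp add: P_def problem_trm_def)
  have unif: "C_unifier {z} P \<sigma>" "C_unifier {z} P \<tau>"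
    using assms(1-3) E_eq_problem_trm_Top_left E_eq_problem_trm_Top_right
    by (auto simp: P C_unifier_def C_invariant_upd_Top \<sigma>_def \<tau>_def)
  moreover have "\<not> less_general \<sigma> \<tau>" "\<not> less_general \<tau> \<sigma>"
    using assms(1) not_less_general_upd_Top unfolding \<sigma>_def \<tau>_def by metis+
  moreover have no_common: "\<not> (\<exists>\<mu>. C_unifier {z} P \<mu> \<and> less_general \<sigma> \<mu> \<and> less_general \<tau> \<mu>)"
    using no_common_generalization[OF assms(1-3)] unfolding P \<sigma>_def \<tau>_def by blast
  moreover have "\<not> (\<exists>\<mu>. C_mgu {z} P \<mu>)"
    using no_common unif unfolding C_mgu_def by blast
  moreover have "\<not> unitary_svr TYPE(nat)"
    using calculation unif unfolding unitary_svr_def by blast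
  ultimately show ?thesis by blast
qed

end
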